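(* Let $k\ge 1$ be an integer, and fix $r>0$ and $0<\beta<1$. Then there exists a finite metric space $(X,\rho)$, equipped with the counting measure $\mu(A)=|A|$, such that (i) $M(X)=0$; (ii) $T_{k+1}(X)\le \dfrac{1}{(k+1)!}\,\beta\,|X|^{k+1}$; (iii) $|X|-\mu(\mathcal{X}^* )\ge \dfrac{1}{k+1}\,\beta^{1/k}\,|X|$, where $\mathcal{X}^*$ is an $r$-cluster structure of order $k$ of maximal measure in $X$.
   Context: For a metric space $(X,\rho)$ with a measure $\mu$ and a fixed $r>0$: an $s$-cluster is a measurable subset of $X$ of diameter at most $s$. For sets $A,B$, $\rho(A,B)=\inf\{\rho(x,y): x\in A, y\in B\}$. An $r$-cluster structure of order $k$ is a family $\mathcal{X}=\{X_1,\dots,X_k\}$ of $2r$-clusters with $\rho(X_i,X_j)\ge r$ for all $1\le i<j\le k$; its measure is $\mu(\mathcal{X})=\sum_{i=1}^k\mu(X_i)$. Define $M(X)=\frac12(\mu\otimes\mu)\{(x,y)\in X^2: r<\rho(x,y)\le 3r\}$ and, for an integer $m\ge1$, $T_m(X)=\frac{1}{m!}\mu^{\otimes m}\{(x_1,\dots,x_m)\in X^m: \rho(x_i,x_j)>r \text{ for all } 1\le i<j\le m\}$. *)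

theory Defs
  imports "HOL-Analysis.Analysis"
begin

text \<open>The measure is the counting measure, so every subset is measurable and
 mu(A) = card A.\<close>

definition metric_on :: "nat set \<Rightarrow> (nat \<Rightarrow> nat \<Rightarrow> real) \<Rightarrow> bool" where
  "metric_on X \<rho> \<longleftrightarrow>
     (\<forall>x\<in>X. \<forall>y\<in>X. 0 \<le> \<rho> x y \<and> (\<rho> x y = 0 \<longleftrightarrow> x = y) \<and> \<rho> x y = \<rho> y x) \<and>
     (\<forall>x\<in>X. \<forall>y\<in>X. \<forall>z\<in>X. \<rho> x z \<le> \<rho> x y + \<rho> y z)"

definition is_cluster :: "nat set \<Rightarrow> (nat \<Rightarrow> nat \<Rightarrow> real) \<Rightarrow> real \<Rightarrow> nat set \<Rightarrow> bool" where
  "is_cluster X \<rho> s A \<longleftrightarrow> A \<subseteq> X \<and> (\<forall>x\<in>A. \<forall>y\<in>A. \<rho> x y \<le> s)"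

text \<open>rho(A,B) >= r, with inf over the empty set = +infinity.\<close>
definition set_dist_ge :: "(nat \<Rightarrow> nat \<Rightarrow> real) \<Rightarrow> nat set \<Rightarrow> nat set \<Rightarrow> real \<Rightarrow> bool" where
  "set_dist_ge \<rho> A B r \<longleftrightarrow> (\<forall>x\<in>A. \<forall>y\<in>B. r \<le> \<rho> x y)"

definition cluster_structure ::
  "nat set \<Rightarrow> (nat \<Rightarrow> nat \<Rightarrow> real) \<Rightarrow> real \<Rightarrow> nat \<Rightarrow> (nat \<Rightarrow> nat set) \<Rightarrow> bool" where
  "cluster_structure X \<rho> r k Cs \<longleftrightarrow>
     (\<forall>i<k. is_cluster X \<rho> (2 * r) (Cs i)) \<and>
     (\<forall>i j. i < j \<and> j < k \<longrightarrow> set_dist_ge \<rho> (Cs i) (Cs j) r)"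

definition cs_measure :: "nat \<Rightarrow> (nat \<Rightarrow> nat set) \<Rightarrow> nat" where
  "cs_measure k Cs = (\<Sum>i<k. card (Cs i))"

definition max_cs_measure :: "nat set \<Rightarrow> (nat \<Rightarrow> nat \<Rightarrow> real) \<Rightarrow> real \<Rightarrow> nat \<Rightarrow> nat" where
  "max_cs_measure X \<rho> r k = Max {cs_measure k Cs | Cs. cluster_structure X \<rho> r k Cs}"

definition M_fun :: "nat set \<Rightarrow> (nat \<Rightarrow> nat \<Rightarrow> real) \<Rightarrow> real \<Rightarrow> real" where
  "M_fun X \<rho> r = (1/2) * real (card {(x,y) \<in> X \<times> X. r < \<rho> x y \<and> \<rho> x y \<le> 3 * r})"

definition T_fun :: "nat set \<Rightarrow> (nat \<Rightarrow> nat \<Rightarrow> real) \<Rightarrow> real \<Rightarrow> nat \<Rightarrow> real" where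
  "T_fun X \<rho> r m = (1 / fact m) *
     real (card {xs \<in> PiE {..<m} (\<lambda>_. X). \<forall>i j. i < j \<and> j < m \<longrightarrow> r < \<rho> (xs i) (xs j)})"

end

theory Submission
  imports Defs "HOL-Real_Asymp.Real_Asymp"
begin

(* The space consists of a clump of B points at mutual distance r/2 and L isolated points at
   distance 4r from everything else.  No distance lies in (r, 3r], so M vanishes.  A 2r-cluster
   is either inside the clump or a single isolated point, and two r-separated clusters cannot
   both meet the clump, so every cluster structure of order k has measure at most B + k - 1.
   A (k+1)-tuple of pairwise r-far points has at most one entry in the clump, so
   (k+1)! T_{k+1} <= L^{k+1} + (k+1) B L^k.  With L ~ c |X| and c = beta^{1/k} / (k+1) this is
   asymptotically c^k (k+1 - k c) |X|^{k+1} < beta |X|^{k+1}, while |X| minus the maximal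
   measure is at least L - k + 1 >= c |X|. *)

definition blob_metric :: "nat \<Rightarrow> real \<Rightarrow> nat \<Rightarrow> nat \<Rightarrow> real" where
  "blob_metric B r x y = (if x = y then 0 else if x < B \<and> y < B then r / 2 else 4 * r)"

lemma metric_on_blob_metric: "r > 0 \<Longrightarrow> metric_on X (blob_metric B r)"
  unfolding metric_on_def blob_metric_def by auto

lemma blob_metric_gt_iff:
  "r > 0 \<Longrightarrow> r < blob_metric B r x y \<longleftrightarrow> x \<noteq> y \<and> (B \<le> x \<or> B \<le> y)"
  unfolding blob_metric_def by auto

lemma blob_metric_le_2r_iff:
  "r > 0 \<Longrightarrow> blob_metric B r x y \<le> 2 * r \<longleftrightarrow> x = y \<or> (x < B \<and> y < B)"
  unfolding blob_metric_def by auto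

lemma M_fun_blob_metric:
  assumes "r > 0"
  shows "M_fun X (blob_metric B r) r = 0"
proof -
  have no_pairs:
    "{(x, y) \<in> X \<times> X. r < blob_metric B r x y \<and> blob_metric B r x y \<le> 3 * r} = {}"
    using assms unfolding blob_metric_def by auto
  show ?thesis unfolding M_fun_def no_pairs by simp
qed

lemma cluster_blob_metric:
  assumes "r > 0" and "is_cluster X (blob_metric B r) (2 * r) C"
  shows "C \<subseteq> {..<B} \<or> (\<exists>c. C = {c})"
proof (cases "C \<subseteq> {..<B}")
  case False
  then obtain c where c: "c \<in> C" "B \<le> c" by (auto simp: subset_eq)
  have "x = c" if "x \<in> C" for x
    using assms c \<open>x \<in> C\<close> blob_metric_le_2r_iff[OF \<open>r > 0\<close>, of B x c]
    unfolding is_cluster_def by auto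
  then have "C = {c}" using c by blast
  then show ?thesis by blast
qed blast

lemma separated_sets_blob_metric:
  assumes "r > 0" and "set_dist_ge (blob_metric B r) C D r"
  shows "C \<inter> {..<B} = {} \<or> D \<inter> {..<B} = {}"
proof (rule ccontr)
  assume "\<not> ?thesis"
  then obtain x y where "x \<in> C" "y \<in> D" "x < B" "y < B" by auto
  then have "blob_metric B r x y < r" and "r \<le> blob_metric B r x y"
    using assms unfolding blob_metric_def set_dist_ge_def by auto
  then show False by simp
qed

lemma cs_measure_blob_metric_le:
  assumes "r > 0" and "B \<ge> 1" and Cs: "cluster_structure X (blob_metric B r) r k Cs"
  shows "cs_measure k Cs \<le> k + (B - 1)"
proof -
  define I where "I = {i. i < k \<and> Cs i \<inter> {..<B} \<noteq> {}}"
  have meets_blob: "Cs i \<inter> {..<B} = {} \<or> Cs j \<inter> {..<B} = {}" if "i < j" "j < k" for i j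
    using Cs that separated_sets_blob_metric[OF \<open>r > 0\<close>] unfolding cluster_structure_def by blast
  have "i = j" if "i \<in> I" "j \<in> I" for i j
    using that meets_blob[of i j] meets_blob[of j i] unfolding I_def
    by (cases i j rule: linorder_cases) auto
  then have card_I: "card I \<le> 1"
    by (simp add: card_le_Suc0_iff_eq I_def)
  have "card (Cs i) \<le> 1 + (if i \<in> I then B - 1 else 0)" if "i < k" for i
  proof -
    have "is_cluster X (blob_metric B r) (2 * r) (Cs i)"
      using Cs \<open>i < k\<close> unfolding cluster_structure_def by blast
    then consider "Cs i \<subseteq> {..<B}" | c where "Cs i = {c}"
      using cluster_blob_metric[OF \<open>r > 0\<close>] by blast
    then show ?thesis
    proof cases
      case 1
      then have "card (Cs i) \<le> B" using card_mono[of "{..<B}"] by fastforce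
      moreover have "i \<notin> I \<Longrightarrow> Cs i = {}" using 1 \<open>i < k\<close> unfolding I_def by blast
      ultimately show ?thesis by auto
    qed simp
  qed
  then have "cs_measure k Cs \<le> (\<Sum>i<k. 1 + (if i \<in> I then B - 1 else 0))"
    unfolding cs_measure_def by (intro sum_mono) auto
  also have "\<dots> = k + (B - 1) * card I"
  proof -
    have "{..<k} \<inter> I = I" unfolding I_def by blast
    then have "(\<Sum>i<k. if i \<in> I then B - 1 else 0) = (B - 1) * card I"
      using sum.inter_restrict[of "{..<k}" "\<lambda>_. B - 1" I] by (simp add: mult.commute)
    then show ?thesis by (simp only: sum.distrib) simp
  qed
  also have "\<dots> \<le> k + (B - 1)"
    using card_I by simp
  finally show ?thesis .
qed

lemma max_cs_measure_le:
  assumes "\<And>Cs. cluster_structure X \<rho> r k Cs \<Longrightarrow> cs_measure k Cs \<le> b"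
  shows "max_cs_measure X \<rho> r k \<le> b"
proof -
  let ?S = "{cs_measure k Cs | Cs. cluster_structure X \<rho> r k Cs}"
  have "cluster_structure X \<rho> r k (\<lambda>_. {})"
    unfolding cluster_structure_def is_cluster_def set_dist_ge_def by simp
  then have "?S \<noteq> {}" by blast
  moreover have bounded: "?S \<subseteq> {..b}" using assms by blast
  then have "finite ?S" by (rule finite_subset) simp
  ultimately show ?thesis
    using bounded unfolding max_cs_measure_def by (subst Max_le_iff) auto
qed

lemma card_PiE_if_eq:
  assumes "j < m"
  shows "card (PiE {..<m} (\<lambda>i. if i = j then A else C)) = card A * card C ^ (m - 1)"
proof -
  have "card (PiE {..<m} (\<lambda>i. if i = j then A else C))
      = card A * (\<Prod>i\<in>{..<m} - {j}. card (if i = j then A else C))"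
    using assms by (simp add: card_PiE prod.remove)
  also have "(\<Prod>i\<in>{..<m} - {j}. card (if i = j then A else C)) = card C ^ (m - 1)"
    using assms by simp
  finally show ?thesis .
qed

lemma card_far_tuples_blob_metric_le:
  assumes "r > 0"
  shows "card {xs \<in> PiE {..<m} (\<lambda>_. {..<B + L}).
            \<forall>i j. i < j \<and> j < m \<longrightarrow> r < blob_metric B r (xs i) (xs j)}
         \<le> L ^ m + m * (B * L ^ (m - 1))"
    (is "card ?far \<le> _")
proof -
  let ?Iso = "PiE {..<m} (\<lambda>_. {B..<B + L})"
  let ?One = "\<lambda>j. PiE {..<m} (\<lambda>i. if i = j then {..<B} else {B..<B + L})"
  have "?far \<subseteq> ?Iso \<union> (\<Union>j<m. ?One j)"
  proof
    fix xs assume "xs \<in> ?far"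
    then have xs: "xs \<in> PiE {..<m} (\<lambda>_. {..<B + L})"
      and far: "\<And>i j. i < j \<Longrightarrow> j < m \<Longrightarrow> xs i \<noteq> xs j \<and> (B \<le> xs i \<or> B \<le> xs j)"
      using blob_metric_gt_iff[OF assms] by auto
    show "xs \<in> ?Iso \<union> (\<Union>j<m. ?One j)"
    proof (cases "\<exists>j<m. xs j < B")
      case False
      then have "xs \<in> ?Iso" using xs by (auto simp: PiE_iff)
      then show ?thesis by blast
    next
      case True
      then obtain j where j: "j < m" "xs j < B" by blast
      have "B \<le> xs i" if "i < m" "i \<noteq> j" for i
        using far[of i j] far[of j i] j that by (cases "i < j") auto
      then have "xs \<in> ?One j" using xs j by (auto simp: PiE_iff)
      then show ?thesis using j by blast
    qed
  qed
  then have "card ?far \<le> card (?Iso \<union> (\<Union>j<m. ?One j))"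
    by (intro card_mono) (auto intro!: finite_PiE)
  also have "\<dots> \<le> card ?Iso + (\<Sum>j<m. card (?One j))"
    by (intro order.trans[OF card_Un_le] add_left_mono card_UN_le) simp
  also have "\<dots> = L ^ m + m * (B * L ^ (m - 1))"
  proof -
    have "card (?One j) = B * L ^ (m - 1)" if "j < m" for j
      using card_PiE_if_eq[OF that, of "{..<B}" "{B..<B + L}"] by simp
    then show ?thesis by (simp add: card_PiE)
  qed
  finally show ?thesis .
qed

lemma eventually_far_tuple_count_le:
  fixes c :: real and L :: "nat \<Rightarrow> real"
  assumes "0 < c" "c < 1" "k \<ge> 1"
    and lower: "\<And>n. c * n + k \<le> L n" and upper: "\<And>n. L n \<le> c * n + k + 1"
  shows "\<forall>\<^sub>F n in sequentially. L n < n \<and>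
           L n ^ (k + 1) + (real k + 1) * ((n - L n) * L n ^ k)
             \<le> (c * (real k + 1)) ^ k * real n ^ (k + 1)"
proof -
  define f where "f x = x ^ (k + 1) + (k + 1) * ((1 - x) * x ^ k)" for x :: real
  have ratio: "(\<lambda>n. L n / n) \<longlonglongrightarrow> c"
  proof (rule tendsto_sandwich)
    show "\<forall>\<^sub>F n in sequentially. (c * n + k) / n \<le> L n / n"
      using lower by (intro always_eventually allI divide_right_mono) auto
    show "\<forall>\<^sub>F n in sequentially. L n / n \<le> (c * n + k + 1) / n"
      using upper by (intro always_eventually allI divide_right_mono) auto
    show "(\<lambda>n. (c * real n + k) / real n) \<longlonglongrightarrow> c" by real_asymp
    show "(\<lambda>n. (c * real n + k + 1) / real n) \<longlonglongrightarrow> c" by real_asymp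
  qed
  have "f c = c ^ k * (k + 1 - k * c)"
    unfolding f_def by (simp add: algebra_simps)
  also have "\<dots> < c ^ k * (k + 1)"
    using assms(1,3) by simp
  also have "\<dots> \<le> c ^ k * (k + 1) ^ k"
    using assms(1,3) power_increasing[of 1 k "1 + real k"] by (intro mult_left_mono) (auto simp: add.commute)
  finally have "f c < (c * (k + 1)) ^ k"
    by (simp add: power_mult_distrib)
  moreover have "(\<lambda>n. f (L n / n)) \<longlonglongrightarrow> f c"
    unfolding f_def by (intro tendsto_intros ratio)
  ultimately have "\<forall>\<^sub>F n in sequentially. f (L n / n) < (c * (k + 1)) ^ k"
    by (simp add: order_tendstoD)
  moreover have "\<forall>\<^sub>F n in sequentially. L n / n < 1"
    using ratio \<open>c < 1\<close> by (simp add: order_tendstoD)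
  ultimately show ?thesis
    using eventually_gt_at_top[of 0]
  proof eventually_elim
    case (elim n)
    have "L n ^ (k + 1) + (k + 1) * ((n - L n) * L n ^ k) = n ^ (k + 1) * f (L n / n)"
      using elim unfolding f_def by (simp add: field_simps power_divide)
    also have "\<dots> \<le> n ^ (k + 1) * (c * (k + 1)) ^ k"
      using elim by (intro mult_left_mono) auto
    finally show ?case
      using elim by (simp add: algebra_simps)
  qed
qed

lemma T_fun_blob_metric_le:
  assumes "r > 0"
  shows "T_fun {..<B + L} (blob_metric B r) r (k + 1)
           \<le> (real L ^ (k + 1) + (real k + 1) * (real B * real L ^ k)) / fact (k + 1)"
proof -
  have "real (card {xs \<in> PiE {..<k + 1} (\<lambda>_. {..<B + L}).
                \<forall>i j. i < j \<and> j < k + 1 \<longrightarrow> r < blob_metric B r (xs i) (xs j)})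
          \<le> real L ^ (k + 1) + (real k + 1) * (real B * real L ^ k)"
    (is "real (card ?far) \<le> ?bound")
    using of_nat_mono[OF card_far_tuples_blob_metric_le[OF assms, of "k + 1" B L]]
    by (simp add: algebra_simps)
  then have "real (card ?far) / fact (k + 1) \<le> ?bound / fact (k + 1)"
    by (rule divide_right_mono) simp
  then show ?thesis
    unfolding T_fun_def by simp
qed

lemma exists_blob_sizes:
  fixes c :: real
  assumes "0 < c" "c < 1" "k \<ge> 1"
  obtains B L :: nat where "B \<ge> 1" "c * real (B + L) + k \<le> L"
    "real L ^ (k + 1) + (real k + 1) * (real B * real L ^ k)
       \<le> (c * (real k + 1)) ^ k * real (B + L) ^ (k + 1)"
proof -
  define L where "L n = nat \<lceil>c * n\<rceil> + k" for n :: nat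
  have L_bounds: "c * n + k \<le> L n" "L n \<le> c * n + k + 1" for n
  proof -
    have "real (nat \<lceil>c * n\<rceil>) = \<lceil>c * n\<rceil>" using assms(1) by simp
    then show "c * n + k \<le> L n" "L n \<le> c * n + k + 1"
      unfolding L_def using le_of_int_ceiling[of "c * n"] of_int_ceiling_le_add_one[of "c * n"]
      by auto
  qed
  have "\<forall>\<^sub>F n in sequentially. real (L n) < n \<and>
          real (L n) ^ (k + 1) + (real k + 1) * ((n - real (L n)) * real (L n) ^ k)
            \<le> (c * (real k + 1)) ^ k * real n ^ (k + 1)"
    using assms L_bounds by (intro eventually_far_tuple_count_le)
  then obtain n where "L n < n"
    and "real (L n) ^ (k + 1) + (real k + 1) * ((n - real (L n)) * real (L n) ^ k)
           \<le> (c * (real k + 1)) ^ k * real n ^ (k + 1)"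
    by (auto simp: eventually_sequentially)
  moreover have "n = (n - L n) + L n" "real (n - L n) = n - real (L n)"
    using \<open>L n < n\<close> by auto
  ultimately show ?thesis
    using that[of "n - L n" "L n"] L_bounds(1)[of n] by auto
qed

theorem mainTheorem1:
  fixes k :: nat and r \<beta> :: real
  assumes "k \<ge> 1" and "r > 0" and "0 < \<beta>" and "\<beta> < 1"
  shows "\<exists>(X :: nat set) (\<rho> :: nat \<Rightarrow> nat \<Rightarrow> real).
           finite X \<and> X \<noteq> {} \<and> metric_on X \<rho> \<and>
           M_fun X \<rho> r = 0 \<and>
           T_fun X \<rho> r (k + 1) \<le> (1 / fact (k + 1)) * \<beta> * real (card X) ^ (k + 1) \<and>
           real (card X) - real (max_cs_measure X \<rho> r k)
             \<ge> (1 / real (k + 1)) * \<beta> powr (1 / real k) * real (card X)"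
proof -
  define c where "c = \<beta> powr (1 / real k) / (real k + 1)"
  have "\<beta> powr (1 / real k) < 1"
    using assms by (simp add: powr01_less_one)
  then have c: "0 < c" "c < 1" and c_pow: "(c * (real k + 1)) ^ k = \<beta>"
    using assms by (auto simp: c_def powr_power)
  obtain B L where B: "B \<ge> 1" and L: "c * real (B + L) + k \<le> L"
    and count: "real L ^ (k + 1) + (real k + 1) * (real B * real L ^ k)
                  \<le> (c * (real k + 1)) ^ k * real (B + L) ^ (k + 1)"
    by (rule exists_blob_sizes[OF c assms(1)])
  define X where "X = {..<B + L}"
  have card_X: "card X = B + L" by (simp add: X_def)
  have "max_cs_measure X (blob_metric B r) r k \<le> k + (B - 1)"
    using cs_measure_blob_metric_le[OF assms(2) B] by (rule max_cs_measure_le)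
  then have max_le: "real (max_cs_measure X (blob_metric B r) r k) \<le> real k + real B - 1"
    using B of_nat_mono by (fastforce simp: of_nat_diff)
  have "T_fun X (blob_metric B r) r (k + 1)
          \<le> (real L ^ (k + 1) + (real k + 1) * (real B * real L ^ k)) / fact (k + 1)"
    unfolding X_def by (rule T_fun_blob_metric_le[OF assms(2)])
  also have "\<dots> \<le> \<beta> * real (card X) ^ (k + 1) / fact (k + 1)"
    using count card_X unfolding c_pow by (intro divide_right_mono) auto
  finally have "T_fun X (blob_metric B r) r (k + 1)
                  \<le> (1 / fact (k + 1)) * \<beta> * real (card X) ^ (k + 1)"
    by simp
  moreover have "real (card X) - real (max_cs_measure X (blob_metric B r) r k) \<ge> c * card X"
    using L max_le card_X by simp
  moreover have "c = (1 / real (k + 1)) * \<beta> powr (1 / real k)"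
    by (simp add: c_def)
  moreover have "finite X" "0 \<in> X" using B by (simp_all add: X_def)
  ultimately show ?thesis
    using metric_on_blob_metric[OF assms(2)] M_fun_blob_metric[OF assms(2)] by blast
qed

end
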